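(* Let $M_n$ be the Motzkin numbers, defined by $M_0=M_1=1$ and $(n+2)M_n=(2n+1)M_{n-1}+(3n-3)M_{n-2}$ for $n\ge 2$. Then $\{M_n\}_{n\ge0}$ is asymptotically $r$-log-convex for every positive integer $r$.
   Context: $\mathscr{L}a_n=a_na_{n+2}-a_{n+1}^2$, $\mathscr{L}^k a_n=\mathscr{L}(\mathscr{L}^{k-1}a_n)$. A sequence is asymptotically $r$-log-convex if there is $N$ such that $\mathscr{L}^k a_n\ge0$ for all $k=1,\dots,r$ and all $n\ge N$. *)

theory Defs
  imports Complex_Main
begin

fun motzkin :: "nat \<Rightarrow> real" where
  "motzkin 0 = 1"
| "motzkin (Suc 0) = 1"
| "motzkin (Suc (Suc k)) =
     ((2 * real (k+2) + 1) * motzkin (Suc k) + (3 * real (k+2) - 3) * motzkin k) / (real (k+2) + 2)"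

definition logop :: "(nat \<Rightarrow> real) \<Rightarrow> nat \<Rightarrow> real" where
  "logop a n = a n * a (n+2) - (a (n+1))^2"

definition logop_iter :: "nat \<Rightarrow> (nat \<Rightarrow> real) \<Rightarrow> nat \<Rightarrow> real" where
  "logop_iter k a = (logop ^^ k) a"

definition asymp_r_log_convex :: "nat \<Rightarrow> (nat \<Rightarrow> real) \<Rightarrow> bool" where
  "asymp_r_log_convex r a \<longleftrightarrow>
     (\<exists>N. \<forall>k\<in>{1..r}. \<forall>n\<ge>N. logop_iter k a n \<ge> 0)"

end

theory Submission
  imports Defs "HOL-Analysis.Analysis"
begin

(* If \<mu> is a finite measure on the reals with moments m n, then L m is again a moment sequence,
   namely that of the image of (x - y)^2/2 d(\<mu> \<otimes> \<mu>) under (x, y) \<mapsto> x y, because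
   \<integral>\<integral> (x - y)^2/2 (x y)^n = m n * m (n+2) - m (n+1)^2.
   Call \<mu> right dominant if it lives on [-N, P] with 0 \<le> N < P and charges every interval (c, P).
   Its moments are then eventually positive: the mass near P contributes at least b^n for some b > N,
   while everything else contributes at most a^n for some a < b. The image measure above is again
   right dominant, with bounds N P and P^2, so all iterates L^k m are eventually positive.
   The Motzkin numbers are the moments of the right dominant measure sqrt((3 - x)(x + 1))/(2 pi) dx
   on [-1, 3]. *)

definition moment :: "real measure \<Rightarrow> nat \<Rightarrow> real" where
  "moment M n = (\<integral>t. t ^ n \<partial>M)"

definition logop_weight :: "real \<times> real \<Rightarrow> real" where
  "logop_weight p = (fst p - snd p)\<^sup>2 / 2"

definition logop_measure :: "real measure \<Rightarrow> real measure" where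
  "logop_measure M =
     distr (density (M \<Otimes>\<^sub>M M) (\<lambda>p. ennreal (logop_weight p))) borel (\<lambda>p. fst p * snd p)"

lemma sets_logop_measure[simp]: "sets (logop_measure M) = sets borel"
  by (simp add: logop_measure_def)

lemma emeasure_density_pos:
  fixes f :: "'a \<Rightarrow> real"
  assumes [measurable]: "f \<in> borel_measurable M" "R \<in> sets M" "A \<in> sets M"
    and "emeasure M R > 0" and "R \<subseteq> A" and f_pos: "\<And>x. x \<in> R \<Longrightarrow> f x > 0"
  shows "emeasure (density M (\<lambda>x. ennreal (f x))) A > 0"
proof -
  have "emeasure (density M (\<lambda>x. ennreal (f x))) R \<noteq> 0"
  proof
    assume "emeasure (density M (\<lambda>x. ennreal (f x))) R = 0"
    then have "(\<integral>\<^sup>+x. ennreal (f x) * indicator R x \<partial>M) = 0"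
      by (simp add: emeasure_density)
    then have "AE x in M. ennreal (f x) * indicator R x = 0"
      by (simp add: nn_integral_0_iff_AE)
    then have "AE x in M. x \<notin> R"
      by eventually_elim (use f_pos in force)
    then show False
      using \<open>emeasure M R > 0\<close> AE_iff_null_sets[of R M] by (simp add: null_sets_def)
  qed
  moreover have "emeasure (density M (\<lambda>x. ennreal (f x))) R \<le> emeasure (density M (\<lambda>x. ennreal (f x))) A"
    using \<open>R \<subseteq> A\<close> by (intro emeasure_mono) auto
  ultimately show ?thesis
    by (metis not_gr_zero order_less_le_trans)
qed

locale bounded_support_measure = finite_measure M for M :: "real measure" + fixes B :: real
  assumes sets_eq_borel[measurable_cong]: "sets M = sets borel"
    and AE_abs_le: "AE t in M. \<bar>t\<bar> \<le> B"
begin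

sublocale square: pair_sigma_finite M M
  by unfold_locales

sublocale square: finite_measure "M \<Otimes>\<^sub>M M"
  by (rule finite_measure_pair_measure) unfold_locales

lemma space_eq_UNIV: "space M = UNIV"
  using sets_eq_imp_space_eq[OF sets_eq_borel] by simp

lemma logop_weight_measurable[measurable]: "logop_weight \<in> borel_measurable (M \<Otimes>\<^sub>M M)"
  unfolding logop_weight_def by measurable

lemma AE_pair_both:
  assumes [measurable]: "Measurable.pred M Q" and "AE t in M. Q t"
  shows "AE p in M \<Otimes>\<^sub>M M. Q (fst p) \<and> Q (snd p)"
proof (rule square.AE_pair_measure)
  show "{p \<in> space (M \<Otimes>\<^sub>M M). Q (fst p) \<and> Q (snd p)} \<in> sets (M \<Otimes>\<^sub>M M)"
    by measurable
  show "AE x in M. AE y in M. Q (fst (x, y)) \<and> Q (snd (x, y))"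
    using assms(2) by eventually_elim (use assms(2) in \<open>auto elim: eventually_mono\<close>)
qed

lemma AE_pair_abs_le: "AE p in M \<Otimes>\<^sub>M M. \<bar>fst p\<bar> \<le> B \<and> \<bar>snd p\<bar> \<le> B"
  by (rule AE_pair_both[OF _ AE_abs_le]) measurable

lemma integrable_power: "integrable M (\<lambda>t. t ^ n)"
proof (rule integrable_const_bound[where B = "B ^ n"])
  show "AE t in M. norm (t ^ n) \<le> B ^ n"
    using AE_abs_le by eventually_elim (auto simp: power_abs intro: power_mono)
qed simp

lemma integrable_pair_power: "integrable (M \<Otimes>\<^sub>M M) (\<lambda>p. fst p ^ i * snd p ^ j)"
proof (rule square.integrable_const_bound[where B = "B ^ i * B ^ j"])
  show "AE p in M \<Otimes>\<^sub>M M. norm (fst p ^ i * snd p ^ j) \<le> B ^ i * B ^ j"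
    using AE_pair_abs_le
    by eventually_elim (auto simp: power_abs abs_mult intro!: mult_mono power_mono)
qed simp

lemma integral_pair_power:
  "(\<integral>p. fst p ^ i * snd p ^ j \<partial>(M \<Otimes>\<^sub>M M)) = moment M i * moment M j"
proof -
  have "(\<integral>p. fst p ^ i * snd p ^ j \<partial>(M \<Otimes>\<^sub>M M)) = (\<integral>x. (\<integral>y. x ^ i * y ^ j \<partial>M) \<partial>M)"
    using square.integral_fst'[OF integrable_pair_power[of i j]] by simp
  also have "\<dots> = moment M i * moment M j"
    by (simp add: moment_def integrable_power)
  finally show ?thesis .
qed

lemma moment_logop_measure: "moment (logop_measure M) n = logop (moment M) n"
proof -
  let ?X = "\<lambda>i j p. fst p ^ i * snd p ^ j"
  have "moment (logop_measure M) n
      = (\<integral>p. logop_weight p * (fst p * snd p) ^ n \<partial>(M \<Otimes>\<^sub>M M))"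
    unfolding moment_def logop_measure_def
    by (subst integral_distr) (auto simp: integral_density logop_weight_def)
  also have "\<dots> = (\<integral>p. ?X (n+2) n p / 2 + ?X n (n+2) p / 2 - ?X (n+1) (n+1) p \<partial>(M \<Otimes>\<^sub>M M))"
    by (rule Bochner_Integration.integral_cong)
       (auto simp: logop_weight_def power2_eq_square power_mult_distrib field_simps)
  also have "\<dots> = moment M (n+2) * moment M n / 2 + moment M n * moment M (n+2) / 2
      - moment M (n+1) * moment M (n+1)"
    by (simp only: Bochner_Integration.integral_diff Bochner_Integration.integral_add
        integral_divide_zero Bochner_Integration.integrable_diff Bochner_Integration.integrable_add
        integrable_divide_zero integrable_pair_power integral_pair_power)
  also have "\<dots> = logop (moment M) n"
    by (simp add: logop_def power2_eq_square)
  finally show ?thesis .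
qed

lemma finite_measure_logop_measure: "finite_measure (logop_measure M)"
proof -
  have "emeasure (density (M \<Otimes>\<^sub>M M) (\<lambda>p. ennreal (logop_weight p))) (space (M \<Otimes>\<^sub>M M))
      = (\<integral>\<^sup>+p. ennreal (logop_weight p) \<partial>(M \<Otimes>\<^sub>M M))"
    by (simp add: emeasure_density)
  also have "\<dots> \<le> (\<integral>\<^sup>+p. ennreal (2 * B\<^sup>2) \<partial>(M \<Otimes>\<^sub>M M))"
    using AE_pair_abs_le
  proof (intro nn_integral_mono_AE, eventually_elim)
    case (elim p)
    then have "(fst p - snd p)\<^sup>2 \<le> (2 * B)\<^sup>2"
      by (intro abs_le_square_iff[THEN iffD1]) auto
    then show ?case
      by (intro ennreal_leI) (simp add: logop_weight_def power_mult_distrib)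
  qed
  also have "\<dots> < \<infinity>"
    by (simp add: ennreal_mult_eq_top_iff less_top[symmetric])
  finally have "finite_measure (density (M \<Otimes>\<^sub>M M) (\<lambda>p. ennreal (logop_weight p)))"
    by (intro finite_measureI) simp
  then show ?thesis
    unfolding logop_measure_def by (rule finite_measure.finite_measure_distr) simp
qed

end

lemma mult_mem_bounds:
  fixes a b N P :: real
  assumes "0 \<le> N" "N \<le> P" "-N \<le> a" "a \<le> P" "-N \<le> b" "b \<le> P"
  shows "-(N * P) \<le> a * b \<and> a * b \<le> P * P"
  using assms
  by (smt (verit, best) mult.commute mult_minus_left ordered_comm_semiring_class.comm_mult_left_mono)

lemma exists_square_between:
  fixes x P :: real
  assumes "0 < P" "x < P * P"
  shows "\<exists>c. 0 \<le> c \<and> c < P \<and> x < c * c"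
proof (cases "x < 0")
  case True
  then show ?thesis
    using assms by (intro exI[of _ "P / 2"]) (auto intro: order_less_le_trans)
next
  case False
  define c where "c = (sqrt x + P) / 2"
  have "sqrt x < P"
    using assms real_sqrt_less_mono[OF assms(2)] by simp
  then have c: "0 \<le> sqrt x" "sqrt x < c" "c < P"
    using False by (auto simp: c_def)
  have "x = sqrt x * sqrt x"
    using False by simp
  also have "\<dots> < c * c"
    using c by (intro mult_strict_mono) linarith+
  finally have "x < c * c" .
  moreover have "0 \<le> c"
    using c by linarith
  ultimately show ?thesis
    using \<open>c < P\<close> by blast
qed

locale right_dominant_measure = finite_measure M for M :: "real measure" + fixes N P :: real
  assumes sets_eq_borel[measurable_cong]: "sets M = sets borel"
    and nonneg_N: "0 \<le> N" and N_less_P: "N < P"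
    and AE_bounds: "AE t in M. -N \<le> t \<and> t \<le> P"
    and mass_near_top: "c < P \<Longrightarrow> emeasure M {c<..<P} > 0"
begin

lemma P_pos: "0 < P"
  using nonneg_N N_less_P by linarith

sublocale bounded_support_measure M P
proof
  show "AE t in M. \<bar>t\<bar> \<le> P"
    using AE_bounds by eventually_elim (use N_less_P in linarith)
qed (fact sets_eq_borel)

lemma exists_mass_below:
  assumes "c < P"
  shows "\<exists>d. c < d \<and> d < P \<and> emeasure M {c<..d} > 0"
proof (rule ccontr)
  assume no_mass: "\<not> ?thesis"
  define d where "d k = P - (P - c) / (real k + 2)" for k :: nat
  have d: "c < d k" "d k < P" for k
  proof -
    have "(P - c) / (real k + 2) < (P - c) / 1"
      using assms by (intro divide_strict_left_mono) auto
    with assms show "c < d k" "d k < P"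
      by (auto simp: d_def)
  qed
  have cover: "{c<..<P} \<subseteq> (\<Union>k. {c<..d k})"
  proof
    fix x assume x: "x \<in> {c<..<P}"
    obtain k :: nat where "(P - c) / (P - x) \<le> real k + 2"
      by (metis add_increasing2 real_arch_simple zero_le_numeral)
    then have "x \<le> d k"
      using x by (simp add: d_def field_simps)
    then show "x \<in> (\<Union>k. {c<..d k})"
      using x by auto
  qed
  have "{c<..d k} \<in> null_sets M" for k
    using no_mass d[of k] by (auto simp: null_sets_def not_less) (meson not_le)
  then have "(\<Union>k. {c<..d k}) \<in> null_sets M"
    by (rule null_sets_UN)
  then have "{c<..<P} \<in> null_sets M"
    by (rule null_sets_subset[OF _ _ cover]) (simp add: sets_eq_borel)
  then show False
    using mass_near_top[OF assms] by (simp add: null_sets_def)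
qed

lemma AE_logop_measure_bounds: "AE t in logop_measure M. -(N * P) \<le> t \<and> t \<le> P * P"
proof -
  have "AE p in M \<Otimes>\<^sub>M M. (-N \<le> fst p \<and> fst p \<le> P) \<and> (-N \<le> snd p \<and> snd p \<le> P)"
    by (rule AE_pair_both[OF _ AE_bounds]) measurable
  then have "AE p in M \<Otimes>\<^sub>M M. -(N * P) \<le> fst p * snd p \<and> fst p * snd p \<le> P * P"
    by eventually_elim (meson mult_mem_bounds nonneg_N N_less_P less_imp_le)
  then show ?thesis
    unfolding logop_measure_def
    by (subst AE_distr_iff) (auto simp: AE_density elim: eventually_mono)
qed

lemma logop_measure_mass_near_top:
  assumes "x < P * P"
  shows "emeasure (logop_measure M) {x<..<P * P} > 0"
proof -
  obtain c where c: "0 \<le> c" "c < P" "x < c * c"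
    using exists_square_between[OF P_pos assms] by blast
  obtain d where d: "c < d" "d < P" "emeasure M {c<..d} > 0"
    using exists_mass_below[OF \<open>c < P\<close>] by blast
  \<comment> \<open>A rectangle off the diagonal, so that the weight is positive on it.\<close>
  define R where "R = {c<..d} \<times> {d<..<P}"
  have "emeasure (M \<Otimes>\<^sub>M M) R = emeasure M {c<..d} * emeasure M {d<..<P}"
    unfolding R_def by (rule emeasure_pair_measure_Times) auto
  then have "emeasure (M \<Otimes>\<^sub>M M) R > 0"
    using d mass_near_top[OF \<open>d < P\<close>] by (simp add: ennreal_zero_less_mult_iff)
  moreover have "R \<subseteq> (\<lambda>p. fst p * snd p) -` {x<..<P * P}"
  proof (clarsimp simp: R_def)
    fix a b assume "c < a" "a \<le> d" "d < b" "b < P"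
    then have "c * c \<le> a * b" "a * b < P * P"
      using c by (auto intro!: mult_mono mult_strict_mono)
    then show "x < a * b \<and> a * b < P * P"
      using c by linarith
  qed
  moreover have "(\<lambda>p. fst p * snd p) -` {x<..<P * P} \<in> sets (M \<Otimes>\<^sub>M M)"
  proof -
    have "(\<lambda>p. fst p * snd p) -` {x<..<P * P} \<inter> space (M \<Otimes>\<^sub>M M) \<in> sets (M \<Otimes>\<^sub>M M)"
      by measurable
    then show ?thesis
      by (simp add: space_pair_measure space_eq_UNIV)
  qed
  moreover have "logop_weight p > 0" if "p \<in> R" for p
    using that by (auto simp: R_def logop_weight_def)
  ultimately have "emeasure (density (M \<Otimes>\<^sub>M M) (\<lambda>p. ennreal (logop_weight p)))
      ((\<lambda>p. fst p * snd p) -` {x<..<P * P}) > 0"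
    by (intro emeasure_density_pos) (auto simp: R_def)
  then show ?thesis
    unfolding logop_measure_def
    by (subst emeasure_distr) (auto simp: space_pair_measure space_eq_UNIV)
qed

lemma right_dominant_logop_measure: "right_dominant_measure (logop_measure M) (N * P) (P * P)"
proof -
  interpret logop: finite_measure "logop_measure M"
    by (rule finite_measure_logop_measure)
  show ?thesis
    using nonneg_N N_less_P P_pos AE_logop_measure_bounds logop_measure_mass_near_top
    by unfold_locales auto
qed

lemma moment_lower_bound:
  assumes "N \<le> a" "a \<le> b"
  shows "b ^ n * measure M {b<..<P} - a ^ n * measure M (space M) \<le> moment M n"
proof -
  have a: "0 \<le> a"
    using nonneg_N assms by linarith
  have "AE t in M. b ^ n * indicator {b<..<P} t - a ^ n \<le> t ^ n"
    using AE_bounds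
  proof eventually_elim
    case (elim t)
    show ?case
    proof (cases "t \<in> {b<..<P}")
      case True
      then have "b ^ n \<le> t ^ n"
        using a assms by (intro power_mono) auto
      moreover have "0 \<le> a ^ n"
        using a by simp
      ultimately show ?thesis
        using True by simp
    next
      case False
      have "- (a ^ n) \<le> t ^ n"
      proof (cases "t < 0")
        case True
        then have "\<bar>t\<bar> ^ n \<le> a ^ n"
          using elim assms by (intro power_mono) auto
        then show ?thesis
          by (simp add: power_abs[symmetric] abs_le_iff)
      next
        case False
        then have "0 \<le> t ^ n" "0 \<le> a ^ n"
          using a by simp_all
        then show ?thesis
          by linarith
      qed
      with False show ?thesis by simp
    qed
  qed
  moreover have ind: "integrable M (\<lambda>t. b ^ n * indicator {b<..<P} t)"
    by (intro integrable_mult_right integrable_real_indicator)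
       (auto simp: sets_eq_borel less_top[symmetric])
  ultimately have "(\<integral>t. b ^ n * indicator {b<..<P} t - a ^ n \<partial>M) \<le> moment M n"
    unfolding moment_def by (intro integral_mono_AE integrable_power Bochner_Integration.integrable_diff) auto
  moreover have "(\<integral>t. b ^ n * indicator {b<..<P} t - a ^ n \<partial>M)
      = b ^ n * measure M {b<..<P} - a ^ n * measure M (space M)"
    using ind by (simp add: sets_eq_borel)
  ultimately show ?thesis
    by simp
qed

lemma eventually_moment_pos: "eventually (\<lambda>n. moment M n > 0) sequentially"
proof -
  define a where "a = (2 * N + P) / 3"
  define b where "b = (N + 2 * P) / 3"
  have ab: "N \<le> a" "0 < a" "a < b" "b < P"
    using nonneg_N N_less_P by (auto simp: a_def b_def)
  define m where "m = measure M {b<..<P}"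
  have "0 < m"
    using mass_near_top[OF \<open>b < P\<close>] by (simp add: m_def emeasure_eq_measure)
  have "(\<lambda>n. (a / b) ^ n * measure M (space M)) \<longlonglongrightarrow> 0 * measure M (space M)"
    using ab by (intro tendsto_mult LIMSEQ_power_zero) auto
  then have "eventually (\<lambda>n. (a / b) ^ n * measure M (space M) < m) sequentially"
    using \<open>0 < m\<close> by (intro order_tendstoD) auto
  then show ?thesis
  proof eventually_elim
    case (elim n)
    have "a ^ n * measure M (space M) = (a / b) ^ n * measure M (space M) * b ^ n"
      using ab by (simp add: power_divide)
    also have "\<dots> < m * b ^ n"
      using elim ab by (intro mult_strict_right_mono) auto
    finally show ?case
      using moment_lower_bound[OF ab(1) less_imp_le[OF ab(3)], of n] by (simp add: m_def mult.commute)
  qed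
qed

end

lemma right_dominant_logop_iter:
  assumes "right_dominant_measure M N P"
  shows "\<exists>N' P'. right_dominant_measure ((logop_measure ^^ k) M) N' P'
    \<and> logop_iter k (moment M) = moment ((logop_measure ^^ k) M)"
proof (induction k)
  case 0
  then show ?case
    using assms by (auto simp: logop_iter_def)
next
  case (Suc k)
  then obtain N' P' where
    dominant: "right_dominant_measure ((logop_measure ^^ k) M) N' P'" and
    moments: "logop_iter k (moment M) = moment ((logop_measure ^^ k) M)"
    by blast
  interpret right_dominant_measure "(logop_measure ^^ k) M" N' P'
    by (fact dominant)
  have "logop_iter (Suc k) (moment M) = logop (moment ((logop_measure ^^ k) M))"
    using moments by (simp add: logop_iter_def)
  also have "\<dots> = moment ((logop_measure ^^ Suc k) M)"
    using moment_logop_measure by auto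
  finally show ?case
    using right_dominant_logop_measure by auto
qed

theorem asymp_r_log_convex_moment:
  assumes "right_dominant_measure M N P"
  shows "asymp_r_log_convex r (moment M)"
proof -
  have "eventually (\<lambda>n. logop_iter k (moment M) n > 0) sequentially" for k
    using right_dominant_logop_iter[OF assms, of k] right_dominant_measure.eventually_moment_pos
    by metis
  then have "eventually (\<lambda>n. \<forall>k\<in>{1..r}. logop_iter k (moment M) n > 0) sequentially"
    by (intro eventually_ball_finite) auto
  then show ?thesis
    unfolding asymp_r_log_convex_def eventually_sequentially by (auto intro: less_imp_le)
qed

definition motzkin_integral :: "nat \<Rightarrow> real" where
  "motzkin_integral n = (LBINT t=ereal 0..ereal pi. (1 + 2 * cos t) ^ n * sin t ^ 2)"

lemma interval_integral_antiderivative: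
  fixes F f :: "real \<Rightarrow> real"
  assumes "\<And>x. (F has_real_derivative f x) (at x)" and "\<And>x. isCont f x"
  shows "(LBINT t=ereal a..ereal b. f t) = F b - F a"
proof (rule interval_integral_FTC_finite)
  show "continuous_on {min a b..max a b} f"
    using assms(2) by (intro continuous_at_imp_continuous_on) auto
  show "(F has_vector_derivative f x) (at x within {min a b..max a b})" for x
    using assms(1)[unfolded has_real_derivative_iff_has_vector_derivative]
    by (rule has_vector_derivative_at_within)
qed

lemma sin_times_sin: "sin x * sin x = 1 - cos x * cos (x :: real)"
  using sin_cos_squared_add3[of x] by linarith

lemma motzkin_integral_0: "motzkin_integral 0 = pi / 2"
proof -
  have "motzkin_integral 0 = (LBINT t=ereal 0..ereal pi. sin t ^ 2)"
    by (simp add: motzkin_integral_def)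
  also have "\<dots> = (pi - sin pi * cos pi) / 2 - (0 - sin 0 * cos 0) / 2"
    by (rule interval_integral_antiderivative)
       (auto intro!: derivative_eq_intros continuous_intros simp: power2_eq_square sin_times_sin)
  finally show ?thesis
    by simp
qed

lemma motzkin_integral_1: "motzkin_integral 1 = pi / 2"
proof -
  have "((\<lambda>t. (t - sin t * cos t) / 2 + 2 * sin t ^ 3 / 3) has_real_derivative
      (1 + 2 * cos x) * sin x ^ 2) (at x)" for x
    by (rule derivative_eq_intros refl
        | simp add: field_simps power2_eq_square eval_nat_numeral sin_times_sin)+
  then have "(LBINT t=ereal 0..ereal pi. (1 + 2 * cos t) * sin t ^ 2)
      = ((pi - sin pi * cos pi) / 2 + 2 * sin pi ^ 3 / 3) - ((0 - sin 0 * cos 0) / 2 + 2 * sin 0 ^ 3 / 3)"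
    by (rule interval_integral_antiderivative) (intro continuous_intros)
  then show ?thesis
    by (simp add: motzkin_integral_def)
qed

lemma motzkin_antiderivative_identity:
  fixes c s :: real
  assumes ss: "s * s = 1 - c * c"
  shows "real (Suc k) * (1 + 2 * c) ^ k * (2 * (- s)) * s ^ 3 + (1 + 2 * c) ^ Suc k * (3 * s\<^sup>2 * c)
     = (real (k + 4) * (1 + 2 * c) ^ (k + 2) - real (2 * k + 5) * (1 + 2 * c) ^ (k + 1)
        - real (3 * (k + 1)) * (1 + 2 * c) ^ k) * s\<^sup>2 / 2"
proof -
  have "real (Suc k) * (1 + 2 * c) ^ k * (2 * (- s)) * s ^ 3 + (1 + 2 * c) ^ Suc k * (3 * s\<^sup>2 * c)
      = (1 + 2 * c) ^ k * (s * s) * (- 2 * (real k + 1) * (s * s) + 3 * (1 + 2 * c) * c)"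
    by (simp add: algebra_simps power2_eq_square eval_nat_numeral)
  also have "- 2 * (real k + 1) * (s * s) + 3 * (1 + 2 * c) * c
      = ((real k + 4) * (1 + 2 * c)\<^sup>2 - (2 * real k + 5) * (1 + 2 * c) - 3 * (real k + 1)) / 2"
    unfolding ss by (simp add: algebra_simps power2_eq_square)
  also have "(1 + 2 * c) ^ k * (s * s) * (((real k + 4) * (1 + 2 * c)\<^sup>2
        - (2 * real k + 5) * (1 + 2 * c) - 3 * (real k + 1)) / 2)
      = (real (k + 4) * (1 + 2 * c) ^ (k + 2) - real (2 * k + 5) * (1 + 2 * c) ^ (k + 1)
        - real (3 * (k + 1)) * (1 + 2 * c) ^ k) * s\<^sup>2 / 2"
    by (simp add: algebra_simps power2_eq_square power_add)
  finally show ?thesis .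
qed

lemma motzkin_antiderivative:
  "((\<lambda>t. (1 + 2 * cos t) ^ Suc k * sin t ^ 3) has_real_derivative
    (real (k + 4) * (1 + 2 * cos x) ^ (k + 2) - real (2 * k + 5) * (1 + 2 * cos x) ^ (k + 1)
      - real (3 * (k + 1)) * (1 + 2 * cos x) ^ k) * sin x ^ 2 / 2) (at x)"
  unfolding motzkin_antiderivative_identity[OF sin_times_sin, symmetric]
  by (rule derivative_eq_intros refl | simp add: algebra_simps power2_eq_square eval_nat_numeral)+

lemma motzkin_integral_rec:
  "real (k + 4) * motzkin_integral (k + 2)
    = real (2 * k + 5) * motzkin_integral (k + 1) + real (3 * (k + 1)) * motzkin_integral k"
proof -
  define f :: "nat \<Rightarrow> real \<Rightarrow> real" where "f n t = (1 + 2 * cos t) ^ n * sin t ^ 2" for n t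
  have integrable: "interval_lebesgue_integrable lborel (ereal 0) (ereal pi) (f n)" for n
    unfolding f_def by (intro interval_integrable_isCont continuous_intros)
  have "(LBINT t=ereal 0..ereal pi. (real (k + 4) * f (k + 2) t - real (2 * k + 5) * f (k + 1) t
      - real (3 * (k + 1)) * f k t) / 2) = 0"
    using interval_integral_antiderivative[OF motzkin_antiderivative, where a = 0 and b = pi]
    by (simp add: f_def algebra_simps continuous_intros)
  moreover have "(LBINT t=ereal 0..ereal pi. (real (k + 4) * f (k + 2) t - real (2 * k + 5) * f (k + 1) t
      - real (3 * (k + 1)) * f k t) / 2)
    = (real (k + 4) * motzkin_integral (k + 2) - real (2 * k + 5) * motzkin_integral (k + 1)
      - real (3 * (k + 1)) * motzkin_integral k) / 2"
    unfolding motzkin_integral_def f_def[symmetric]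
    by (simp add: integrable interval_lebesgue_integral_diff interval_lebesgue_integral_mult_right
        interval_lebesgue_integrable_mult_right interval_lebesgue_integral_divide)
  ultimately show ?thesis
    by simp
qed

lemma motzkin_eq_integral: "motzkin n = 2 / pi * motzkin_integral n"
proof (induction n rule: motzkin.induct)
  case (3 k)
  have rec: "motzkin_integral (k + 2) = (real (2 * k + 5) * motzkin_integral (k + 1)
      + real (3 * (k + 1)) * motzkin_integral k) / real (k + 4)"
    using motzkin_integral_rec[of k] by (simp add: field_simps)
  have "motzkin (k + 2)
      = (real (2 * k + 5) * motzkin (k + 1) + real (3 * (k + 1)) * motzkin k) / real (k + 4)"
    by (simp add: algebra_simps)
  also have "\<dots> = 2 / pi * ((real (2 * k + 5) * motzkin_integral (k + 1)
      + real (3 * (k + 1)) * motzkin_integral k) / real (k + 4))"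
    by (simp add: 3 algebra_simps add_divide_distrib)
  also have "\<dots> = 2 / pi * motzkin_integral (k + 2)"
    unfolding rec ..
  finally show ?case
    by simp
qed (use motzkin_integral_0 motzkin_integral_1 in simp_all)

text \<open>The density sqrt((3 - x)(x + 1))/(2 pi) on [-1, 3], written as the image of
  (2/pi) sin^2 t dt on [0, pi] under t \<mapsto> 1 + 2 cos t.\<close>

definition motzkin_density :: "real \<Rightarrow> real" where
  "motzkin_density t = indicator {0..pi} t * (2 / pi) * sin t ^ 2"

definition motzkin_measure :: "real measure" where
  "motzkin_measure =
     distr (density lborel (\<lambda>t. ennreal (motzkin_density t))) borel (\<lambda>t. 1 + 2 * cos t)"

lemma motzkin_density_measurable[measurable]: "motzkin_density \<in> borel_measurable borel"
  unfolding motzkin_density_def by measurable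

lemma motzkin_density_nonneg: "0 \<le> motzkin_density t"
  by (simp add: motzkin_density_def indicator_def)

lemma moment_motzkin_measure: "moment motzkin_measure = motzkin"
proof
  fix n
  have "moment motzkin_measure n = (\<integral>t. motzkin_density t * (1 + 2 * cos t) ^ n \<partial>lborel)"
    unfolding moment_def motzkin_measure_def
    by (subst integral_distr) (auto simp: integral_density motzkin_density_nonneg)
  also have "\<dots> = 2 / pi * (LBINT t:{0..pi}. (1 + 2 * cos t) ^ n * sin t ^ 2)"
    by (simp add: motzkin_density_def set_lebesgue_integral_def mult_ac)
  also have "\<dots> = motzkin n"
    by (simp add: motzkin_eq_integral motzkin_integral_def interval_integral_Icc)
  finally show "moment motzkin_measure n = motzkin n" .
qed

lemma finite_measure_motzkin_density: "finite_measure (density lborel (\<lambda>t. ennreal (motzkin_density t)))"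
proof (rule finite_measureI)
  have "ennreal (motzkin_density t) \<le> ennreal (2 / pi) * indicator {0..pi} t" for t
  proof (cases "t \<in> {0..pi}")
    case True
    have "sin t ^ 2 \<le> 1"
      using sin_squared_eq[of t] by simp
    with True show ?thesis
      by (auto simp: motzkin_density_def intro!: ennreal_leI divide_right_mono)
  qed (simp add: motzkin_density_def)
  then have "(\<integral>\<^sup>+t. ennreal (motzkin_density t) \<partial>lborel)
      \<le> (\<integral>\<^sup>+t. ennreal (2 / pi) * indicator {0..pi} t \<partial>lborel)"
    by (intro nn_integral_mono)
  also have "\<dots> = ennreal (2 / pi) * ennreal pi"
    by (simp add: nn_integral_cmult_indicator)
  finally show "emeasure (density lborel (\<lambda>t. ennreal (motzkin_density t)))
      (space (density lborel (\<lambda>t. ennreal (motzkin_density t)))) \<noteq> \<infinity>"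
    by (auto simp: emeasure_density top_unique ennreal_mult_eq_top_iff)
qed

lemma motzkin_measure_mass_near_top:
  assumes "c < 3"
  shows "emeasure motzkin_measure {c<..<3} > 0"
proof -
  define d where "d = arccos (max 0 ((c - 1) / 2))"
  have d: "0 < d" "d < pi" "cos d = max 0 ((c - 1) / 2)"
    using assms arccos_lt_bounded[of "max 0 ((c - 1) / 2)"] by (auto simp: d_def)
  have "1 + 2 * cos t \<in> {c<..<3} \<and> motzkin_density t > 0" if t: "t \<in> {0<..<d}" for t
  proof -
    have "max 0 ((c - 1) / 2) < cos t" "cos t < 1"
      using t d cos_monotone_0_pi[of t d] cos_monotone_0_pi[of 0 t] by auto
    moreover have "sin t > 0"
      using t d by (intro sin_gt_zero) auto
    ultimately show ?thesis
      using t d by (auto simp: motzkin_density_def)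
  qed
  moreover have "(\<lambda>t. 1 + 2 * cos t) -` {c<..<3} \<in> sets borel"
  proof -
    have "(\<lambda>t. 1 + 2 * cos t) -` {c<..<3} \<inter> space borel \<in> sets borel"
      by measurable
    then show ?thesis
      by simp
  qed
  ultimately have "emeasure (density lborel (\<lambda>t. ennreal (motzkin_density t)))
      ((\<lambda>t. 1 + 2 * cos t) -` {c<..<3}) > 0"
    using d by (intro emeasure_density_pos[where R = "{0<..<d}"]) auto
  then show ?thesis
    unfolding motzkin_measure_def by (subst emeasure_distr) auto
qed

lemma right_dominant_motzkin_measure: "right_dominant_measure motzkin_measure 1 3"
proof -
  interpret finite_measure motzkin_measure
    unfolding motzkin_measure_def
    by (rule finite_measure.finite_measure_distr[OF finite_measure_motzkin_density]) simp
  show ?thesis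
  proof
    have "-1 \<le> 1 + 2 * cos t \<and> 1 + 2 * cos t \<le> 3" for t :: real
      using cos_ge_minus_one[of t] cos_le_one[of t] by linarith
    then show "AE t in motzkin_measure. -1 \<le> t \<and> t \<le> 3"
      unfolding motzkin_measure_def by (subst AE_distr_iff) auto
  qed (use motzkin_measure_mass_near_top in \<open>auto simp: motzkin_measure_def\<close>)
qed

theorem mainTheorem4:
  fixes r :: nat
  assumes "r \<ge> 1"
  shows "asymp_r_log_convex r motzkin"
  using asymp_r_log_convex_moment[OF right_dominant_motzkin_measure]
  by (simp add: moment_motzkin_measure)

end
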